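(* Let $m,n$ be even positive integers and let $\mathcal{X}_0,\mathcal{X}_1\subseteq\{0,1\}^{2mn}$ be as in the context. There exists a real multilinear polynomial $p$ in $2mn$ variables of degree $\min(n/2,m/2)+1$ such that $p(x)\neq 0$ for all $x\in\mathcal{X}_1$ and $p(x)=0$ for all $x\in\mathcal{X}_0$. More precisely, there is such a polynomial of degree $n/2+1$ (with $p>0$ on $\mathcal{X}_1$) and there is such a polynomial of degree $m/2+1$ (with $p=n/2$ on $\mathcal{X}_1$).
   Context: For $z\in\{0,1\}^k$ let $w(z)$ denote its Hamming weight. Let $\mathcal{A}_1=\{0^m y : y\in\{0,1\}^m,\ m/2\le w(y)\le m\}$ and $\mathcal{A}_0=\{y0^m : y\in\{0,1\}^m,\ m/2\le w(y)\le m\}$ (subsets of $\{0,1\}^{2m}$). A string $x\in\{0,1\}^{2mn}$ is viewed as $n$ consecutive blocks of $2m$ bits, each block being $x^{(0,i)}x^{(1,i)}$ with $x^{(0,i)},x^{(1,i)}\in\{0,1\}^m$, $i=1,\dots,n$. Define $\mathcal{X}_1=\mathcal{A}_0\times\cdots\times\mathcal{A}_0$ ($n$ factors) and $\mathcal{X}_0=\bigcup\{\mathcal{A}_{y_1}\times\cdots\times\mathcal{A}_{y_n} : y\in\{0,1\}^n,\ w(y)=n/2\}$. A multilinear polynomial is $p(x)=\sum_{S\subseteq[N]}a_S\prod_{i\in S}x_i$ with real $a_S$; its degree is $\max\{|S|: a_S\neq 0\}$. *)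

theory Defs
  imports Complex_Main
begin

text \<open>Bit strings in {0,1}^k are Boolean lists of length k; True = 1.\<close>

definition hw :: "bool list \<Rightarrow> nat" where
  "hw z = count_list z True"

definition A_set :: "nat \<Rightarrow> bool \<Rightarrow> bool list set" where
  "A_set m b = {(if b then replicate m False @ y else y @ replicate m False) | y.
      length y = m \<and> real m / 2 \<le> real (hw y) \<and> hw y \<le> m}"

text \<open>Product A_{y_1} x ... x A_{y_n} as concatenations of n blocks of 2m bits.\<close>
definition prod_blocks :: "nat \<Rightarrow> nat \<Rightarrow> (nat \<Rightarrow> bool) \<Rightarrow> bool list set" where
  "prod_blocks m n y = {concat bs | bs. length bs = n \<and> (\<forall>i<n. bs ! i \<in> A_set m (y i))}"

definition X1 :: "nat \<Rightarrow> nat \<Rightarrow> bool list set" where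
  "X1 m n = prod_blocks m n (\<lambda>_. False)"

text \<open>y ranges over {0,1}^n, i.e. functions on {0..<n} (values outside irrelevant).\<close>
definition X0 :: "nat \<Rightarrow> nat \<Rightarrow> bool list set" where
  "X0 m n = (\<Union>{prod_blocks m n y | y. card {i. i < n \<and> y i} * 2 = n})"

text \<open>Multilinear polynomial in N variables x_0..x_{N-1}: coefficient a_S for S \<subseteq> {0..<N}.\<close>
definition ml_eval :: "nat \<Rightarrow> (nat set \<Rightarrow> real) \<Rightarrow> bool list \<Rightarrow> real" where
  "ml_eval N a x = (\<Sum>S\<in>Pow {..<N}. a S * (\<Prod>i\<in>S. (if x ! i then 1 else 0)))"

definition ml_degree :: "nat \<Rightarrow> (nat set \<Rightarrow> real) \<Rightarrow> nat" where
  "ml_degree N a = Max {card S | S. S \<subseteq> {..<N} \<and> a S \<noteq> 0}"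

end

theory Submission
  imports Defs
begin

text \<open>
  On every string of \<open>X0 \<union> X1\<close>, the weight \<open>w\<^sub>i\<close> of the first half of block \<open>i\<close>,
  a linear form, is \<open>0\<close> when the block lies in \<open>A\<^sub>1\<close> and an integer in \<open>[m/2, m]\<close> when it
  lies in \<open>A\<^sub>0\<close>. The elementary symmetric polynomial of degree \<open>n/2 + 1\<close> in
  \<open>w\<^sub>1, \<dots>, w\<^sub>n\<close> is therefore positive on \<open>X1\<close>, where all weights are positive, and
  vanishes on \<open>X0\<close>, where only \<open>n/2\<close> of them are nonzero. On the other hand
  \<open>1 - \<Prod>(1 - w\<^sub>i / j)\<close>, the product over \<open>m/2 \<le> j \<le> m\<close>, is the indicator of block \<open>i\<close>
  lying in \<open>A\<^sub>0\<close>; summing these indicators and subtracting \<open>n/2\<close> gives degree \<open>m/2 + 1\<close>,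
  value \<open>n/2\<close> on \<open>X1\<close> and \<open>0\<close> on \<open>X0\<close>. To make the degree exact rather than an upper
  bound, both polynomials are padded with a monomial of the target degree containing \<open>x\<^sub>0\<close>
  and \<open>x\<^sub>m\<close>, which vanishes on all these strings since one half of the first block is zero.
\<close>

section \<open>Multilinear polynomials of bounded degree\<close>

definition ml_monomial :: "nat set \<Rightarrow> bool list \<Rightarrow> real" where
  "ml_monomial S x = (\<Prod>i\<in>S. of_bool (x ! i))"

lemma ml_eval_eq: "ml_eval N a x = (\<Sum>S\<in>Pow {..<N}. a S * ml_monomial S x)"
  by (simp add: ml_eval_def ml_monomial_def of_bool_def)

lemma ml_monomial_eq: "finite S \<Longrightarrow> ml_monomial S x = of_bool (\<forall>i\<in>S. x ! i)"
  by (auto simp: ml_monomial_def prod_zero_iff)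

lemma ml_monomial_Un:
  "finite S \<Longrightarrow> finite T \<Longrightarrow> ml_monomial (S \<union> T) x = ml_monomial S x * ml_monomial T x"
  by (auto simp: ml_monomial_eq)

lemma ml_eval_fun_upd:
  assumes "T \<subseteq> {..<N}"
  shows "ml_eval N (a(T := c)) x = ml_eval N a x + (c - a T) * ml_monomial T x"
proof -
  have T: "T \<in> Pow {..<N}" using assms by simp
  show ?thesis
    unfolding ml_eval_eq sum.remove[OF finite_Pow_iff[THEN iffD2, OF finite_lessThan] T]
    by (simp add: algebra_simps)
qed

lemma ml_eval_single:
  assumes "T \<subseteq> {..<N}"
  shows "ml_eval N ((\<lambda>_. 0)(T := c)) x = c * ml_monomial T x"
  using ml_eval_fun_upd[OF assms, of "\<lambda>_. 0"] by (simp add: ml_eval_def)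

definition ml_degree_le :: "nat \<Rightarrow> (nat set \<Rightarrow> real) \<Rightarrow> nat \<Rightarrow> bool" where
  "ml_degree_le N a d \<longleftrightarrow> (\<forall>S\<subseteq>{..<N}. a S \<noteq> 0 \<longrightarrow> card S \<le> d)"

definition ml_expressible :: "nat \<Rightarrow> nat \<Rightarrow> (bool list \<Rightarrow> real) \<Rightarrow> bool" where
  "ml_expressible N d f \<longleftrightarrow> (\<exists>a. ml_degree_le N a d \<and> ml_eval N a = f)"

lemma ml_expressible_const: "ml_expressible N d (\<lambda>_. c)"
proof -
  have "ml_eval N ((\<lambda>_. 0)({} := c)) = (\<lambda>_. c)"
    by (simp add: ml_eval_single ml_monomial_def fun_eq_iff)
  moreover have "ml_degree_le N ((\<lambda>_. 0)({} := c)) d"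
    by (simp add: ml_degree_le_def)
  ultimately show ?thesis unfolding ml_expressible_def by blast
qed

lemma ml_expressible_var: "i < N \<Longrightarrow> ml_expressible N 1 (\<lambda>x. of_bool (x ! i))"
proof -
  assume "i < N"
  then have "ml_eval N ((\<lambda>_. 0)({i} := 1)) = (\<lambda>x. of_bool (x ! i))"
    by (simp add: ml_eval_single ml_monomial_def fun_eq_iff)
  moreover have "ml_degree_le N ((\<lambda>_. 0)({i} := 1)) 1"
    by (simp add: ml_degree_le_def)
  ultimately show ?thesis unfolding ml_expressible_def by blast
qed

lemma ml_eval_add: "ml_eval N (\<lambda>S. a S + b S) x = ml_eval N a x + ml_eval N b x"
  by (simp add: ml_eval_eq distrib_right sum.distrib)

lemma ml_eval_scale: "ml_eval N (\<lambda>S. c * a S) x = c * ml_eval N a x"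
  by (simp add: ml_eval_eq sum_distrib_left mult.assoc)

lemma ml_expressible_add:
  assumes "ml_expressible N d f" "ml_expressible N d g"
  shows "ml_expressible N d (\<lambda>x. f x + g x)"
proof -
  obtain a b where a: "ml_degree_le N a d" "ml_eval N a = f" and b: "ml_degree_le N b d" "ml_eval N b = g"
    using assms unfolding ml_expressible_def by blast
  have "ml_degree_le N (\<lambda>S. a S + b S) d"
    unfolding ml_degree_le_def
  proof (intro allI impI)
    fix S assume "S \<subseteq> {..<N}" "a S + b S \<noteq> 0"
    then show "card S \<le> d"
      using a(1) b(1) unfolding ml_degree_le_def by (cases "a S = 0") auto
  qed
  moreover have "ml_eval N (\<lambda>S. a S + b S) = (\<lambda>x. f x + g x)"
    using a(2) b(2) by (simp add: fun_eq_iff ml_eval_add)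
  ultimately show ?thesis
    unfolding ml_expressible_def by blast
qed

lemma ml_expressible_scale:
  assumes "ml_expressible N d f"
  shows "ml_expressible N d (\<lambda>x. c * f x)"
proof -
  obtain a where a: "ml_degree_le N a d" "ml_eval N a = f"
    using assms unfolding ml_expressible_def by blast
  have "ml_degree_le N (\<lambda>S. c * a S) d"
    using a(1) by (simp add: ml_degree_le_def)
  moreover have "ml_eval N (\<lambda>S. c * a S) = (\<lambda>x. c * f x)"
    using a(2) by (simp add: fun_eq_iff ml_eval_scale)
  ultimately show ?thesis
    unfolding ml_expressible_def by blast
qed

definition ml_mult_coeffs ::
    "nat \<Rightarrow> (nat set \<Rightarrow> real) \<Rightarrow> (nat set \<Rightarrow> real) \<Rightarrow> nat set \<Rightarrow> real" where
  "ml_mult_coeffs N a b U =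
     (\<Sum>p | p \<in> Pow {..<N} \<times> Pow {..<N} \<and> fst p \<union> snd p = U. a (fst p) * b (snd p))"

lemma ml_eval_mult_coeffs:
  "ml_eval N (ml_mult_coeffs N a b) x = ml_eval N a x * ml_eval N b x"
proof -
  let ?P = "Pow {..<N}"
  let ?h = "\<lambda>p. a (fst p) * b (snd p) * ml_monomial (fst p \<union> snd p) x"
  have fin: "finite S" if "S \<in> ?P" for S
    using that finite_subset by blast
  have "ml_eval N a x * ml_eval N b x = (\<Sum>S\<in>?P. \<Sum>T\<in>?P. a S * ml_monomial S x * (b T * ml_monomial T x))"
    unfolding ml_eval_eq by (rule sum_product)
  also have "\<dots> = (\<Sum>p\<in>?P \<times> ?P. ?h p)"
    unfolding sum.cartesian_product by (intro sum.cong) (auto simp: ml_monomial_Un fin)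
  also have "\<dots> = (\<Sum>U\<in>?P. \<Sum>p\<in>{p \<in> ?P \<times> ?P. fst p \<union> snd p = U}. ?h p)"
    by (rule sum.group[of "?P \<times> ?P" ?P "\<lambda>p. fst p \<union> snd p" ?h, symmetric]) auto
  also have "\<dots> = (\<Sum>U\<in>?P. ml_mult_coeffs N a b U * ml_monomial U x)"
    unfolding ml_mult_coeffs_def sum_distrib_right
    by (intro sum.cong refl) (auto intro!: sum.cong)
  finally show ?thesis by (simp add: ml_eval_eq)
qed

lemma ml_degree_le_mult_coeffs:
  assumes "ml_degree_le N a d" "ml_degree_le N b e"
  shows "ml_degree_le N (ml_mult_coeffs N a b) (d + e)"
  unfolding ml_degree_le_def
proof (intro allI impI)
  fix U assume "U \<subseteq> {..<N}" "ml_mult_coeffs N a b U \<noteq> 0"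
  then obtain p where p: "p \<in> Pow {..<N} \<times> Pow {..<N}" "fst p \<union> snd p = U"
      "a (fst p) \<noteq> 0" "b (snd p) \<noteq> 0"
    unfolding ml_mult_coeffs_def by (auto elim: sum.not_neutral_contains_not_neutral)
  have "card U \<le> card (fst p) + card (snd p)"
    using p(2) card_Un_le by blast
  also have "\<dots> \<le> d + e"
    using p assms unfolding ml_degree_le_def by (auto intro!: add_mono)
  finally show "card U \<le> d + e" .
qed

lemma ml_expressible_mult:
  assumes "ml_expressible N d f" "ml_expressible N e g"
  shows "ml_expressible N (d + e) (\<lambda>x. f x * g x)"
proof -
  obtain a b where "ml_degree_le N a d" "ml_eval N a = f" "ml_degree_le N b e" "ml_eval N b = g"
    using assms unfolding ml_expressible_def by blast
  then show ?thesis
    unfolding ml_expressible_def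
    by (intro exI[of _ "ml_mult_coeffs N a b"]) (auto simp: ml_degree_le_mult_coeffs ml_eval_mult_coeffs)
qed

lemma ml_expressible_sum:
  "finite I \<Longrightarrow> (\<And>i. i \<in> I \<Longrightarrow> ml_expressible N d (f i)) \<Longrightarrow>
    ml_expressible N d (\<lambda>x. \<Sum>i\<in>I. f i x)"
proof (induction I rule: finite_induct)
  case (insert j I)
  then have "ml_expressible N d (\<lambda>x. f j x + (\<Sum>i\<in>I. f i x))"
    by (intro ml_expressible_add) auto
  then show ?case
    using insert.hyps by simp
qed (simp add: ml_expressible_const)

lemma ml_expressible_prod:
  "finite I \<Longrightarrow> (\<And>i. i \<in> I \<Longrightarrow> ml_expressible N d (f i)) \<Longrightarrow>
    ml_expressible N (d * card I) (\<lambda>x. \<Prod>i\<in>I. f i x)"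
proof (induction I rule: finite_induct)
  case (insert j I)
  then have "ml_expressible N (d + d * card I) (\<lambda>x. f j x * (\<Prod>i\<in>I. f i x))"
    by (intro ml_expressible_mult) auto
  then show ?case
    using insert.hyps by simp
qed (simp add: ml_expressible_const)

lemma ml_degree_eq_by_vanishing_monomial:
  assumes f: "ml_expressible N D f" and T: "T \<subseteq> {..<N}" "card T = D"
    and vanish: "\<And>x. x \<in> X \<Longrightarrow> \<not> (\<forall>i\<in>T. x ! i)"
  shows "\<exists>a. ml_degree N a = D \<and> (\<forall>x\<in>X. ml_eval N a x = f x)"
proof -
  obtain a where a: "ml_degree_le N a D" "ml_eval N a = f"
    using f unfolding ml_expressible_def by blast
  have "finite T" using T(1) finite_subset by blast
  then have "ml_eval N (a(T := 1)) x = f x" if "x \<in> X" for x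
    using vanish[OF that] by (simp add: ml_eval_fun_upd[OF T(1)] ml_monomial_eq a(2))
  moreover have "ml_degree N (a(T := 1)) = D"
    unfolding ml_degree_def
  proof (rule Max_eqI)
    show "finite {card S |S. S \<subseteq> {..<N} \<and> (a(T := 1)) S \<noteq> 0}"
      by simp
    show "D \<in> {card S |S. S \<subseteq> {..<N} \<and> (a(T := 1)) S \<noteq> 0}"
      using T by auto
  qed (use a(1) T(2) in \<open>auto simp: ml_degree_le_def split: if_splits\<close>)
  ultimately show ?thesis by blast
qed

section \<open>Strings made of blocks\<close>

lemma nth_concat_equal_length:
  "\<forall>b\<in>set bs. length b = k \<Longrightarrow> i < length bs \<Longrightarrow> j < k \<Longrightarrow> concat bs ! (k * i + j) = bs ! i ! j"
proof (induction bs arbitrary: i)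
  case (Cons b bs)
  then show ?case
    by (cases i) (auto simp: nth_append)
qed simp

lemma A_set_length: "b \<in> A_set m t \<Longrightarrow> length b = 2*m"
  by (auto simp: A_set_def)

lemma prod_blocks_blockE:
  assumes "x \<in> prod_blocks m n y" "i < n"
  obtains b where "b \<in> A_set m (y i)" "\<forall>j<2*m. x ! (2*m*i + j) = b ! j"
proof -
  obtain bs where bs: "x = concat bs" "length bs = n" "\<forall>i<n. bs ! i \<in> A_set m (y i)"
    using assms(1) unfolding prod_blocks_def by blast
  have "\<forall>b\<in>set bs. length b = 2*m"
    using bs(2,3) A_set_length by (metis in_set_conv_nth)
  then show ?thesis
    using that[of "bs ! i"] bs assms(2) nth_concat_equal_length by metis
qed

lemma prod_blocks_not_nth_0_and_nth_m:
  assumes "x \<in> prod_blocks m n y" "0 < n" "0 < m"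
  shows "\<not> (x ! 0 \<and> x ! m)"
proof -
  obtain b where b: "b \<in> A_set m (y 0)" "\<forall>j<2*m. x ! j = b ! j"
    using prod_blocks_blockE[OF assms(1,2)] by auto
  moreover obtain z where "length z = m" "b = (if y 0 then replicate m False @ z else z @ replicate m False)"
    using b(1) unfolding A_set_def by blast
  ultimately show ?thesis
    using assms(3) by (cases "y 0") (auto simp: nth_append)
qed

lemma ml_degree_eq_on_prod_blocks:
  assumes f: "ml_expressible (2*m*n) D f" and D: "2 \<le> D" "D \<le> 2*m*n"
  shows "\<exists>a. ml_degree (2*m*n) a = D \<and> (\<forall>y. \<forall>x\<in>prod_blocks m n y. ml_eval (2*m*n) a x = f x)"
proof -
  have "0 < m" "0 < n"
    using D by (auto intro!: gr0I)
  then have "m < 2*m*n"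
    by (cases n) auto
  have "card ({..<2*m*n} - {0, m}) = 2*m*n - 2"
    using \<open>0 < m\<close> \<open>m < 2*m*n\<close> by (subst card_Diff_subset) auto
  then have "D - 2 \<le> card ({..<2*m*n} - {0, m})"
    using D(2) by simp
  then obtain R where R: "R \<subseteq> {..<2*m*n} - {0, m}" "card R = D - 2" "finite R"
    by (rule obtain_subset_with_card_n)
  define T where "T = insert 0 (insert m R)"
  have "0 \<notin> R" "m \<notin> R"
    using R(1) by auto
  then have "card T = Suc (Suc (card R))"
    using \<open>finite R\<close> \<open>0 < m\<close> by (simp add: T_def)
  then have card_T: "card T = D"
    using R(2) D(1) by linarith
  have T_sub: "T \<subseteq> {..<2*m*n}"
    using R(1) \<open>m < 2*m*n\<close> by (auto simp: T_def)
  have "\<not> (\<forall>i\<in>T. x ! i)" if "x \<in> prod_blocks m n y" for x y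
    using prod_blocks_not_nth_0_and_nth_m[OF that \<open>0 < n\<close> \<open>0 < m\<close>] by (auto simp: T_def)
  then show ?thesis
    using ml_degree_eq_by_vanishing_monomial[OF f T_sub card_T, of "{x. \<exists>y. x \<in> prod_blocks m n y}"]
    by blast
qed

definition block_weight :: "nat \<Rightarrow> nat \<Rightarrow> bool list \<Rightarrow> real" where
  "block_weight m i x = (\<Sum>j<m. of_bool (x ! (2*m*i + j)))"

lemma ml_expressible_block_weight:
  assumes "i < n"
  shows "ml_expressible (2*m*n) 1 (block_weight m i)"
  unfolding block_weight_def[abs_def]
proof (rule ml_expressible_sum)
  fix j assume "j \<in> {..<m}"
  then have "2*m*i + j < 2*m*(i + 1)"
    by simp
  also have "\<dots> \<le> 2*m*n"
    using assms by (intro mult_le_mono2) simp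
  finally show "ml_expressible (2*m*n) 1 (\<lambda>x. of_bool (x ! (2*m*i + j)))"
    by (rule ml_expressible_var)
qed simp

lemma sum_of_bool_nth_eq_hw: "(\<Sum>j<length z. of_bool (z ! j)) = real (hw z)"
proof (induction z)
  case (Cons a z)
  have "(\<Sum>j<length (a # z). of_bool ((a # z) ! j)) = of_bool a + (\<Sum>j<length z. of_bool (z ! j))"
    by (simp only: length_Cons sum.lessThan_Suc_shift nth_Cons_0 nth_Cons_Suc)
  also have "\<dots> = real (hw (a # z))"
    using Cons.IH by (simp add: hw_def)
  finally show ?case .
qed (simp add: hw_def)

lemma block_weight_prod_blocksE:
  assumes "x \<in> prod_blocks m n y" "i < n"
  obtains z where "length z = m" "m \<le> 2 * hw z" "hw z \<le> m"
    "block_weight m i x = (if y i then 0 else real (hw z))"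
proof -
  obtain b where b: "b \<in> A_set m (y i)" "\<forall>j<2*m. x ! (2*m*i + j) = b ! j"
    using prod_blocks_blockE[OF assms] .
  obtain z where z: "length z = m" "m \<le> 2 * hw z" "hw z \<le> m"
      "b = (if y i then replicate m False @ z else z @ replicate m False)"
    using b(1) unfolding A_set_def by auto
  have "block_weight m i x = (\<Sum>j<m. of_bool (b ! j))"
    unfolding block_weight_def using b(2) by (intro sum.cong) auto
  also have "\<dots> = (if y i then 0 else real (hw z))"
    using sum_of_bool_nth_eq_hw[of z] z by (auto simp: nth_append simp del: sum_of_bool_eq)
  finally show ?thesis
    using that z(1-3) by blast
qed

lemma X0E:
  assumes "x \<in> X0 m n"
  obtains y where "x \<in> prod_blocks m n y" "2 * card {i. i < n \<and> \<not> y i} = n"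
proof -
  obtain y where y: "x \<in> prod_blocks m n y" "card {i. i < n \<and> y i} * 2 = n"
    using assms unfolding X0_def by blast
  have "{i. i < n \<and> \<not> y i} = {..<n} - {i. i < n \<and> y i}"
    by auto
  then have "card {i. i < n \<and> \<not> y i} = n - card {i. i < n \<and> y i}"
    by (simp add: card_Diff_subset subset_eq)
  then show ?thesis
    using that y by simp
qed

section \<open>The two separating polynomials\<close>

definition esym_block_weights :: "nat \<Rightarrow> nat \<Rightarrow> nat \<Rightarrow> bool list \<Rightarrow> real" where
  "esym_block_weights k m n x = (\<Sum>S | S \<subseteq> {..<n} \<and> card S = k. \<Prod>i\<in>S. block_weight m i x)"

lemma ml_expressible_esym_block_weights: "ml_expressible (2*m*n) k (esym_block_weights k m n)"
  unfolding esym_block_weights_def[abs_def]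
proof (rule ml_expressible_sum)
  show "finite {S. S \<subseteq> {..<n} \<and> card S = k}"
    by (rule finite_subset[of _ "Pow {..<n}"]) auto
  fix S assume S: "S \<in> {S. S \<subseteq> {..<n} \<and> card S = k}"
  then have "finite S"
    using finite_subset by blast
  then have "ml_expressible (2*m*n) (1 * card S) (\<lambda>x. \<Prod>i\<in>S. block_weight m i x)"
    by (rule ml_expressible_prod) (use S ml_expressible_block_weight in auto)
  then show "ml_expressible (2*m*n) k (\<lambda>x. \<Prod>i\<in>S. block_weight m i x)"
    using S by simp
qed

lemma esym_block_weights_pos:
  assumes "0 < m" "k \<le> n" "x \<in> prod_blocks m n (\<lambda>_. False)"
  shows "esym_block_weights k m n x > 0"
proof -
  have pos: "block_weight m i x > 0" if i: "i < n" for i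
  proof -
    obtain z where "m \<le> 2 * hw z" "block_weight m i x = real (hw z)"
      using block_weight_prod_blocksE[OF assms(3) i] by auto
    then show ?thesis
      using assms(1) by simp
  qed
  have "{..<k} \<in> {S. S \<subseteq> {..<n} \<and> card S = k}"
    using assms(2) by auto
  then have "{S. S \<subseteq> {..<n} \<and> card S = k} \<noteq> {}"
    by blast
  then show ?thesis
    unfolding esym_block_weights_def
    by (intro sum_pos prod_pos) (auto intro: finite_subset[of _ "Pow {..<n}"] pos)
qed

lemma esym_block_weights_eq_0:
  assumes x: "x \<in> prod_blocks m n y" and k: "card {i. i < n \<and> \<not> y i} < k"
  shows "esym_block_weights k m n x = 0"
  unfolding esym_block_weights_def
proof (intro sum.neutral ballI)
  fix S assume S: "S \<in> {S. S \<subseteq> {..<n} \<and> card S = k}"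
  have "\<not> S \<subseteq> {i. i < n \<and> \<not> y i}"
    using card_mono[of "{i. i < n \<and> \<not> y i}" S] S k by auto
  then obtain i where i: "i \<in> S" "i < n" "y i"
    using S by auto
  obtain z where "block_weight m i x = (if y i then 0 else real (hw z))"
    using block_weight_prod_blocksE[OF x i(2)] by blast
  then have "block_weight m i x = 0"
    using i(3) by simp
  moreover have "finite S"
    using S finite_subset by blast
  ultimately show "(\<Prod>i\<in>S. block_weight m i x) = 0"
    using i(1) by (metis prod_zero)
qed

definition block_A0_indicator :: "nat \<Rightarrow> nat \<Rightarrow> bool list \<Rightarrow> real" where
  "block_A0_indicator m i x = 1 - (\<Prod>j\<in>{m div 2..m}. 1 - block_weight m i x / real j)"

lemma ml_expressible_block_A0_indicator:
  assumes "i < n"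
  shows "ml_expressible (2*m*n) (Suc m - m div 2) (block_A0_indicator m i)"
proof -
  have "ml_expressible (2*m*n) 1 (\<lambda>x. 1 - block_weight m i x / real j)" for j
  proof -
    have "ml_expressible (2*m*n) 1 (\<lambda>x. 1 + (- inverse (real j)) * block_weight m i x)"
      by (intro ml_expressible_add ml_expressible_const ml_expressible_scale
          ml_expressible_block_weight assms)
    then show ?thesis
      by (simp add: field_simps)
  qed
  then have "ml_expressible (2*m*n) (1 * card {m div 2..m})
      (\<lambda>x. \<Prod>j\<in>{m div 2..m}. 1 - block_weight m i x / real j)"
    by (intro ml_expressible_prod) auto
  then have "ml_expressible (2*m*n) (Suc m - m div 2)
      (\<lambda>x. 1 + (- 1) * (\<Prod>j\<in>{m div 2..m}. 1 - block_weight m i x / real j))"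
    by (intro ml_expressible_add ml_expressible_const ml_expressible_scale) simp
  then show ?thesis
    unfolding block_A0_indicator_def[abs_def] by simp
qed

lemma block_A0_indicator_prod_blocks:
  assumes "0 < m" "x \<in> prod_blocks m n y" "i < n"
  shows "block_A0_indicator m i x = of_bool (\<not> y i)"
proof -
  obtain z where z: "m \<le> 2 * hw z" "hw z \<le> m"
      "block_weight m i x = (if y i then 0 else real (hw z))"
    using block_weight_prod_blocksE[OF assms(2,3)] by blast
  show ?thesis
  proof (cases "y i")
    case False
    have "hw z \<in> {m div 2..m}" "0 < hw z"
      using z(1,2) assms(1) by auto
    then have "(\<Prod>j\<in>{m div 2..m}. 1 - block_weight m i x / real j) = 0"
      using z(3) False by (intro prod_zero) (auto intro!: bexI[of _ "hw z"])
    then show ?thesis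
      using False by (simp add: block_A0_indicator_def)
  qed (simp add: block_A0_indicator_def z(3))
qed

lemma sum_block_A0_indicator:
  assumes "0 < m" "x \<in> prod_blocks m n y"
  shows "(\<Sum>i<n. block_A0_indicator m i x) = real (card {i. i < n \<and> \<not> y i})"
proof -
  have "(\<Sum>i<n. block_A0_indicator m i x) = (\<Sum>i<n. of_bool (\<not> y i))"
    using block_A0_indicator_prod_blocks[OF assms] by simp
  also have "\<dots> = real (card ({..<n} \<inter> {i. \<not> y i}))"
    by simp
  also have "{..<n} \<inter> {i. \<not> y i} = {i. i < n \<and> \<not> y i}"
    by auto
  finally show ?thesis .
qed

lemma separating_polynomial_degree_half_n:
  assumes "0 < m" "0 < n" "even n"
  shows "\<exists>a. ml_degree (2*m*n) a = n div 2 + 1 \<and>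
            (\<forall>x\<in>X1 m n. ml_eval (2*m*n) a x > 0) \<and>
            (\<forall>x\<in>X0 m n. ml_eval (2*m*n) a x = 0)"
proof -
  let ?k = "n div 2 + 1"
  have "1 * n \<le> (2*m) * n"
    using assms(1) by (intro mult_le_mono1) simp
  moreover have k: "2 \<le> ?k" "?k \<le> n"
    using assms(2,3) by (auto elim!: evenE)
  ultimately have "2 \<le> ?k" "?k \<le> 2*m*n"
    by linarith+
  from ml_degree_eq_on_prod_blocks[OF ml_expressible_esym_block_weights this]
  obtain a where a: "ml_degree (2*m*n) a = ?k"
      "\<And>y x. x \<in> prod_blocks m n y \<Longrightarrow> ml_eval (2*m*n) a x = esym_block_weights ?k m n x"
    by blast
  have "ml_eval (2*m*n) a x > 0" if "x \<in> X1 m n" for x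
    using that a(2) esym_block_weights_pos[OF assms(1) k(2)] unfolding X1_def by simp
  moreover have "ml_eval (2*m*n) a x = 0" if x: "x \<in> X0 m n" for x
  proof -
    obtain y where y: "x \<in> prod_blocks m n y" "2 * card {i. i < n \<and> \<not> y i} = n"
      using x by (rule X0E)
    then show ?thesis
      using a(2)[OF y(1)] esym_block_weights_eq_0[OF y(1)] by simp
  qed
  ultimately show ?thesis
    using a(1) by blast
qed

lemma separating_polynomial_degree_half_m:
  assumes "0 < m" "even m" "0 < n"
  shows "\<exists>a. ml_degree (2*m*n) a = m div 2 + 1 \<and>
            (\<forall>x\<in>X1 m n. ml_eval (2*m*n) a x = real n / 2) \<and>
            (\<forall>x\<in>X0 m n. ml_eval (2*m*n) a x = 0)"
proof -
  let ?F = "\<lambda>x. (\<Sum>i<n. block_A0_indicator m i x) + - (real n / 2)"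
  have "ml_expressible (2*m*n) (Suc m - m div 2) ?F"
    by (intro ml_expressible_add ml_expressible_sum ml_expressible_const
        ml_expressible_block_A0_indicator) auto
  moreover have "m * 1 \<le> m * (2*n)"
    using assms(3) by (intro mult_le_mono2) simp
  moreover have "Suc m - m div 2 = m div 2 + 1" "2 \<le> m div 2 + 1" "m div 2 + 1 \<le> m"
    using assms(1,2) by (auto elim!: evenE)
  ultimately have "ml_expressible (2*m*n) (m div 2 + 1) ?F" "2 \<le> m div 2 + 1" "m div 2 + 1 \<le> 2*m*n"
    by (simp, linarith, linarith)
  from ml_degree_eq_on_prod_blocks[OF this]
  obtain a where a: "ml_degree (2*m*n) a = m div 2 + 1"
      "\<And>y x. x \<in> prod_blocks m n y \<Longrightarrow> ml_eval (2*m*n) a x = ?F x"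
    by blast
  have "ml_eval (2*m*n) a x = real n / 2" if "x \<in> X1 m n" for x
    using that a(2) sum_block_A0_indicator[OF assms(1)] unfolding X1_def by simp
  moreover have "ml_eval (2*m*n) a x = 0" if x: "x \<in> X0 m n" for x
  proof -
    obtain y where y: "x \<in> prod_blocks m n y" "2 * card {i. i < n \<and> \<not> y i} = n"
      using x by (rule X0E)
    then have "real (card {i. i < n \<and> \<not> y i}) = real n / 2"
      by linarith
    then show ?thesis
      using a(2)[OF y(1)] sum_block_A0_indicator[OF assms(1) y(1)] by simp
  qed
  ultimately show ?thesis
    using a(1) by blast
qed

theorem mainTheorem2:
  fixes m n :: nat
  assumes "m > 0" "n > 0" "even m" "even n"
  shows "(\<exists>a. ml_degree (2*m*n) a = min (n div 2) (m div 2) + 1 \<and>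
            (\<forall>x\<in>X1 m n. ml_eval (2*m*n) a x \<noteq> 0) \<and>
            (\<forall>x\<in>X0 m n. ml_eval (2*m*n) a x = 0))
       \<and> (\<exists>a. ml_degree (2*m*n) a = n div 2 + 1 \<and>
            (\<forall>x\<in>X1 m n. ml_eval (2*m*n) a x > 0) \<and>
            (\<forall>x\<in>X0 m n. ml_eval (2*m*n) a x = 0))
       \<and> (\<exists>a. ml_degree (2*m*n) a = m div 2 + 1 \<and>
            (\<forall>x\<in>X1 m n. ml_eval (2*m*n) a x = real n / 2) \<and>
            (\<forall>x\<in>X0 m n. ml_eval (2*m*n) a x = 0))"
proof -
  obtain a\<^sub>n where a\<^sub>n: "ml_degree (2*m*n) a\<^sub>n = n div 2 + 1"
      "\<forall>x\<in>X1 m n. ml_eval (2*m*n) a\<^sub>n x > 0" "\<forall>x\<in>X0 m n. ml_eval (2*m*n) a\<^sub>n x = 0"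
    using separating_polynomial_degree_half_n assms by blast
  obtain a\<^sub>m where a\<^sub>m: "ml_degree (2*m*n) a\<^sub>m = m div 2 + 1"
      "\<forall>x\<in>X1 m n. ml_eval (2*m*n) a\<^sub>m x = real n / 2" "\<forall>x\<in>X0 m n. ml_eval (2*m*n) a\<^sub>m x = 0"
    using separating_polynomial_degree_half_m assms by blast
  have "\<exists>a. ml_degree (2*m*n) a = min (n div 2) (m div 2) + 1 \<and>
            (\<forall>x\<in>X1 m n. ml_eval (2*m*n) a x \<noteq> 0) \<and>
            (\<forall>x\<in>X0 m n. ml_eval (2*m*n) a x = 0)"
  proof (cases "n div 2 \<le> m div 2")
    case True
    then show ?thesis
      using a\<^sub>n by (intro exI[of _ a\<^sub>n]) auto
  next
    case False
    then show ?thesis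
      using a\<^sub>m assms(2) by (intro exI[of _ a\<^sub>m]) auto
  qed
  then show ?thesis
    using a\<^sub>n a\<^sub>m by blast
qed

end
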